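(* Let $\lambda_0>0$, $k_0 = 2\pi/\lambda_0$, $z_\text{b}>0$, and let $x_\text{b}^{(1)} < x_\text{b}^{(2)}$ be real numbers. Set $\mathcal{O}_\text{d} = (-\infty, x_\text{b}^{(1)}) \cup (x_\text{b}^{(2)}, +\infty)$. For $z>z_\text{b}$ and $x,\nu\in\mathbb{R}$ define $$K(z,x,\nu) = \frac{j}{\lambda_0 \sqrt{z_\text{b}\,(z-z_\text{b})}} \int_{\mathcal{O}_\text{d}} e^{-j \frac{k_0}{2 z_\text{b}} (\xi-\nu)^2}\, e^{-j \frac{k_0}{2 (z-z_\text{b})} (x-\xi)^2} \, \mathrm{d}\xi .$$ Then $$K(z,x,\nu) = \frac{1}{2} \sqrt{\frac{j}{\lambda_0 \, z}} \, e^{-j \frac{k_0}{2 z} (\nu-x)^2} \, F(z,x,\nu),$$ where $$F(z,x,\nu) = 1 + \operatorname{Erf}\!\left(\sqrt{\frac{j k_0 z}{2 z_\text{b} (z-z_\text{b})}} \left[ x_\text{b}^{(1)} - \frac{z_\text{b} x}{z} - \frac{(z-z_\text{b}) \nu}{z}\right]\right) + \operatorname{Erfc}\!\left(\sqrt{\frac{j k_0 z}{2 z_\text{b} (z-z_\text{b})}} \left[ x_\text{b}^{(2)} - \frac{z_\text{b} x}{z} - \frac{(z-z_\text{b}) \nu}{z}\right]\right).$$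
   Context: Here $j$ denotes the imaginary unit ($j^2=-1$). Square roots of complex numbers are principal-branch square roots (so $\sqrt{j}=e^{j\pi/4}$, and $\sqrt{j\,c}=e^{j\pi/4}\sqrt{c}$ for $c>0$). The integrals over the unbounded intervals are oscillatory and are understood as improper (limit) integrals. $\operatorname{Erf}(w) = \frac{2}{\sqrt{\pi}}\int_0^w e^{-t^2}\,\mathrm{d}t$ is the error function extended to complex arguments (an entire function), and $\operatorname{Erfc}(w) = 1 - \operatorname{Erf}(w)$ is the complementary error function. The function $K$ is the paraxial knife-edge diffraction kernel from an aperture point $\nu$ on the plane $z=0$ to an observation point $(z,x)$ beyond a thin obstacle occupying $[x_\text{b}^{(1)},x_\text{b}^{(2)}]$ in the plane $z=z_\text{b}$. *)

theory Defs
  imports "HOL-Complex_Analysis.Complex_Analysis"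
begin

text \<open>Complex error function: Erf w = 2/sqrt pi * integral of exp(-t^2) along the segment from 0 to w
  (path independent since the integrand is entire).\<close>
definition Erf :: "complex \<Rightarrow> complex" where
  "Erf w = (2 / of_real (sqrt pi)) * contour_integral (linepath 0 w) (\<lambda>t. exp (- (t ^ 2)))"

definition Erfc :: "complex \<Rightarrow> complex" where
  "Erfc w = 1 - Erf w"

definition kernel_integrand ::
  "real \<Rightarrow> real \<Rightarrow> real \<Rightarrow> real \<Rightarrow> real \<Rightarrow> real \<Rightarrow> complex" where
  "kernel_integrand k0 zb z x \<nu> \<xi> =
     exp (- \<i> * of_real (k0 / (2 * zb) * (\<xi> - \<nu>) ^ 2)) *
     exp (- \<i> * of_real (k0 / (2 * (z - zb)) * (x - \<xi>) ^ 2))"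

text \<open>Kernel K: the integral over O_d = (-inf, xb1) \<union> (xb2, +inf) is understood as the sum of the
  two improper (limit) integrals.\<close>
definition K ::
  "real \<Rightarrow> real \<Rightarrow> real \<Rightarrow> real \<Rightarrow> real \<Rightarrow> real \<Rightarrow> real \<Rightarrow> complex" where
  "K lambda0 zb xb1 xb2 z x \<nu> =
     (let k0 = 2 * pi / lambda0; g = kernel_integrand k0 zb z x \<nu> in
      (\<i> / of_real (lambda0 * sqrt (zb * (z - zb)))) *
      (Lim at_bot (\<lambda>A. integral {A..xb1} g) + Lim at_top (\<lambda>B. integral {xb2..B} g)))"

end

theory Submission
  imports Defs "HOL-Probability.Distributions" "HOL-Real_Asymp.Real_Asymp"
begin

(* Completing the square in the exponent turns the integrand into a constant phase times
   exp (- i c (xi - m)^2) with c > 0, whose primitive is sqrt pi / (2 a) * Erf (a (xi - m)) for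
   a = sqrt (i c) = sqrt (c / 2) (1 + i).  Both improper integrals therefore reduce to the limits
   of Erf along the diagonal ray a * R, which are +-1: the contour from the real point r to
   r + i r adds only o(1) to the real Gaussian integral, which tends to sqrt pi / 2. *)

lemma Erf_has_field_derivative:
  "(Erf has_field_derivative 2 / of_real (sqrt pi) * exp (- (w ^ 2))) (at w)"
proof -
  have "(\<lambda>t. exp (- (t ^ 2))) holomorphic_on UNIV"
    by (intro holomorphic_intros)
  from holomorphic_convex_primitive'[OF convex_UNIV open_UNIV this]
  obtain g :: "complex \<Rightarrow> complex"
    where "\<And>w. w \<in> UNIV \<Longrightarrow> (g has_field_derivative exp (- (w ^ 2))) (at w within UNIV)"
    by blast
  then have g: "\<And>w. (g has_field_derivative exp (- (w ^ 2))) (at w)"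
    by simp
  have "((\<lambda>t. exp (- (t ^ 2))) has_contour_integral (g w - g 0)) (linepath 0 w)" for w
    using contour_integral_primitive[of UNIV g _ "linepath 0 w"] g by simp
  then have "contour_integral (linepath 0 w) (\<lambda>t. exp (- (t ^ 2))) = g w - g 0" for w
    by (rule contour_integral_unique)
  then have Erf_eq: "Erf = (\<lambda>w. 2 / of_real (sqrt pi) * (g w - g 0))"
    by (simp add: fun_eq_iff Erf_def)
  show ?thesis
    unfolding Erf_eq by (auto intro!: derivative_eq_intros g)
qed

lemma Erf_has_contour_integral_linepath:
  "((\<lambda>t. exp (- (t ^ 2))) has_contour_integral of_real (sqrt pi) / 2 * (Erf v - Erf u))
     (linepath u v)"
proof -
  have "((\<lambda>w. of_real (sqrt pi) / 2 * Erf w) has_field_derivative exp (- (w ^ 2))) (at w)" for w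
    using DERIV_cmult[OF Erf_has_field_derivative, of "of_real (sqrt pi) / 2" w] by simp
  then have "((\<lambda>t. exp (- (t ^ 2))) has_contour_integral
      of_real (sqrt pi) / 2 * Erf v - of_real (sqrt pi) / 2 * Erf u) (linepath u v)"
    using contour_integral_primitive[of UNIV "\<lambda>w. of_real (sqrt pi) / 2 * Erf w"
        "\<lambda>t. exp (- (t ^ 2))" "linepath u v"] by simp
  then show ?thesis
    by (simp add: right_diff_distrib)
qed

lemma Erf_0 [simp]: "Erf 0 = 0"
  by (simp add: Erf_def)

lemma Erf_minus: "Erf (- w) = - Erf w"
proof -
  have "((\<lambda>w. Erf (- w) + Erf w) has_field_derivative 0) (at w within UNIV)" for w
    by (auto intro!: derivative_eq_intros Erf_has_field_derivative[THEN DERIV_chain2])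
  then obtain c where "\<And>w. Erf (- w) + Erf w = c"
    using has_field_derivative_zero_constant[of UNIV "\<lambda>w. Erf (- w) + Erf w"] by auto
  from this[of w] this[of 0] show ?thesis
    by (simp add: add_eq_0_iff)
qed

lemma Erf_of_real:
  assumes "0 \<le> r"
  shows "Erf (of_real r) = of_real (2 / sqrt pi * integral {0..r} (\<lambda>t::real. exp (- t\<^sup>2)))"
proof -
  have "((\<lambda>t. 2 / of_real (sqrt pi) * exp (- (of_real t ^ 2))) has_integral
      Erf (of_real r) - Erf (of_real 0)) {0..r}"
    by (intro fundamental_theorem_of_calculus assms ballI has_vector_derivative_real_field
        Erf_has_field_derivative)
  then have "((\<lambda>t. of_real (2 / sqrt pi * exp (- t\<^sup>2))) has_integral Erf (of_real r)) {0..r}"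
    by (simp add: exp_of_real[symmetric])
  moreover have "((\<lambda>t. of_real (2 / sqrt pi * exp (- t\<^sup>2)) :: complex) has_integral
      of_real (2 / sqrt pi * integral {0..r} (\<lambda>t::real. exp (- t\<^sup>2)))) {0..r}"
  proof (intro has_integral_of_real has_integral_mult_right)
    show "((\<lambda>t. exp (- t\<^sup>2)) has_integral integral {0..r} (\<lambda>t::real. exp (- t\<^sup>2))) {0..r}"
      by (intro integrable_integral integrable_continuous_interval continuous_intros)
  qed
  ultimately show ?thesis
    using has_integral_unique by blast
qed

lemma tendsto_integral_gaussian_half_line:
  "((\<lambda>b. integral {0..b} (\<lambda>t::real. exp (- t\<^sup>2))) \<longlongrightarrow> sqrt pi / 2) at_top"
proof -
  have gauss: "has_bochner_integral lborel (\<lambda>x. indicator {0..} x *\<^sub>R exp (- x\<^sup>2)) (sqrt pi / 2)"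
    by (rule gaussian_moment_0)
  then have integrable: "set_integrable lborel {0::real..} (\<lambda>x. exp (- x\<^sup>2))"
    by (simp add: set_integrable_def has_bochner_integral_iff)
  have "((\<lambda>b. LINT x:{0::real..b}|lborel. exp (- x\<^sup>2)) \<longlongrightarrow> (LINT x:{0::real..}|lborel. exp (- x\<^sup>2))) at_top"
    by (rule tendsto_set_lebesgue_integral_at_top[OF _ integrable]) simp
  moreover have "(LINT x:{0::real..}|lborel. exp (- x\<^sup>2)) = sqrt pi / 2"
    using gauss by (simp add: set_lebesgue_integral_def has_bochner_integral_iff)
  moreover have "(LINT x:{0::real..b}|lborel. exp (- x\<^sup>2)) = integral {0..b} (\<lambda>t::real. exp (- t\<^sup>2))" for b
    by (intro set_borel_integral_eq_integral(2) set_integrable_subset[OF integrable]) auto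
  ultimately show ?thesis
    by (simp only:)
qed

lemma tendsto_Erf_of_real_at_top: "((\<lambda>r. Erf (of_real r)) \<longlongrightarrow> 1) at_top"
proof (rule Lim_transform_eventually)
  have "((\<lambda>r. 2 / sqrt pi * integral {0..r} (\<lambda>t::real. exp (- t\<^sup>2))) \<longlongrightarrow> 2 / sqrt pi * (sqrt pi / 2)) at_top"
    by (intro tendsto_mult_left tendsto_integral_gaussian_half_line)
  then show "((\<lambda>r. of_real (2 / sqrt pi * integral {0..r} (\<lambda>t::real. exp (- t\<^sup>2))) :: complex) \<longlongrightarrow> 1) at_top"
    using tendsto_of_real[where 'a=complex] by force
  show "\<forall>\<^sub>F r in at_top. of_real (2 / sqrt pi * integral {0..r} (\<lambda>t::real. exp (- t\<^sup>2))) = Erf (of_real r)"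
    using eventually_ge_at_top[of 0] by eventually_elim (simp add: Erf_of_real)
qed

lemma norm_Erf_vertical_diff_le:
  assumes "0 \<le> y1" "y1 \<le> y2"
  shows "norm (Erf (Complex r y2) - Erf (Complex r y1)) \<le> 2 / sqrt pi * exp (y2\<^sup>2 - r\<^sup>2) * (y2 - y1)"
proof -
  have "norm (of_real (sqrt pi) / 2 * (Erf (Complex r y2) - Erf (Complex r y1)))
      \<le> exp (y2\<^sup>2 - r\<^sup>2) * norm (Complex r y2 - Complex r y1)"
  proof (rule has_contour_integral_bound_linepath[OF Erf_has_contour_integral_linepath])
    fix w assume "w \<in> closed_segment (Complex r y1) (Complex r y2)"
    then have w: "Re w = r" "y1 \<le> Im w" "Im w \<le> y2"
      using assms by (auto simp: closed_segment_same_Re closed_segment_eq_real_ivl)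
    then have "Im w ^ 2 \<le> y2 ^ 2"
      using assms by (intro power_mono) auto
    then show "norm (exp (- (w ^ 2))) \<le> exp (y2\<^sup>2 - r\<^sup>2)"
      using w by (simp add: power2_eq_square)
  qed simp
  moreover have "norm (Complex r y2 - Complex r y1) = y2 - y1"
    using assms by (simp add: cmod_def)
  moreover have "norm (of_real (sqrt pi) / 2 :: complex) = sqrt pi / 2"
    by simp
  ultimately have "sqrt pi / 2 * norm (Erf (Complex r y2) - Erf (Complex r y1))
      \<le> exp (y2\<^sup>2 - r\<^sup>2) * (y2 - y1)"
    by (simp only: norm_mult)
  then show ?thesis
    by (simp add: field_simps)
qed

text \<open>Split the vertical segment from \<open>r\<close> to \<open>r + \<i> r\<close> at height \<open>r - 1 / sqrt r\<close>: the lower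
  part is damped by \<open>exp ((r - 1 / sqrt r)\<^sup>2 - r\<^sup>2) \<approx> exp (- 2 sqrt r)\<close>, the upper part is short.\<close>
lemma tendsto_Erf_diagonal: "((\<lambda>r. Erf (Complex r r)) \<longlongrightarrow> 1) at_top"
proof -
  have "((\<lambda>r. Erf (Complex r r) - Erf (of_real r)) \<longlongrightarrow> 0) at_top"
  proof (rule Lim_null_comparison)
    show "\<forall>\<^sub>F r in at_top. norm (Erf (Complex r r) - Erf (of_real r))
        \<le> 2 / sqrt pi * (1 / sqrt r) + 2 / sqrt pi * exp ((r - 1 / sqrt r)\<^sup>2 - r\<^sup>2) * (r - 1 / sqrt r)"
      using eventually_ge_at_top[of "1::real"]
    proof eventually_elim
      case (elim r)
      define d where "d = r - 1 / sqrt r"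
      have "0 \<le> 1 / sqrt r" "1 / sqrt r \<le> 1"
        using elim by simp_all
      then have d: "0 \<le> d" "d \<le> r"
        using elim unfolding d_def by linarith+
      have "norm (Erf (Complex r r) - Erf (of_real r))
          \<le> norm (Erf (Complex r r) - Erf (Complex r d)) + norm (Erf (Complex r d) - Erf (Complex r 0))"
        using norm_triangle_ineq[of "Erf (Complex r r) - Erf (Complex r d)"
            "Erf (Complex r d) - Erf (Complex r 0)"] by (simp add: complex_of_real_def)
      also have "\<dots> \<le> 2 / sqrt pi * exp (r\<^sup>2 - r\<^sup>2) * (r - d) + 2 / sqrt pi * exp (d\<^sup>2 - r\<^sup>2) * (d - 0)"
        using d by (intro add_mono norm_Erf_vertical_diff_le) auto
      finally show ?case
        by (simp add: d_def)
    qed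
    show "((\<lambda>r. 2 / sqrt pi * (1 / sqrt r) + 2 / sqrt pi * exp ((r - 1 / sqrt r)\<^sup>2 - r\<^sup>2) * (r - 1 / sqrt r))
        \<longlongrightarrow> 0) at_top"
      by real_asymp
  qed
  then have "((\<lambda>r. Erf (of_real r) + (Erf (Complex r r) - Erf (of_real r))) \<longlongrightarrow> 1 + 0) at_top"
    by (intro tendsto_add tendsto_Erf_of_real_at_top)
  then show ?thesis
    by simp
qed

lemma csqrt_imaginary:
  assumes "0 \<le> c"
  shows "csqrt (\<i> * of_real c) = Complex (sqrt (c / 2)) (sqrt (c / 2))"
  by (rule csqrt_unique) (use assms in \<open>auto simp: complex_eq_iff power2_eq_square\<close>)

lemma csqrt_imaginary_mult:
  assumes "0 \<le> s" "0 \<le> c"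
  shows "csqrt (\<i> * of_real s) * csqrt (\<i> * of_real c) = \<i> * of_real (sqrt (s * c))"
proof -
  have "sqrt 4 = (2 :: real)"
    using real_sqrt_abs[of 2] by simp
  then have "2 * (sqrt (c / 2) * sqrt (s / 2)) = sqrt (s * c)"
    by (simp add: real_sqrt_mult[symmetric] real_sqrt_divide)
  then show ?thesis
    using assms by (simp add: csqrt_imaginary complex_eq_iff)
qed

lemma tendsto_Erf_csqrt_imaginary_at_top:
  assumes "0 < c"
  shows "((\<lambda>u. Erf (csqrt (\<i> * of_real c) * of_real u)) \<longlongrightarrow> 1) at_top"
proof -
  define \<rho> where "\<rho> = sqrt (c / 2)"
  have "filterlim (\<lambda>u. \<rho> * u) at_top at_top"
    using assms by (intro filterlim_tendsto_pos_mult_at_top[OF tendsto_const _ filterlim_ident])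
      (simp add: \<rho>_def)
  moreover have "csqrt (\<i> * of_real c) * of_real u = Complex (\<rho> * u) (\<rho> * u)" for u
    using assms by (simp add: csqrt_imaginary \<rho>_def complex_eq_iff)
  ultimately show ?thesis
    using filterlim_compose[OF tendsto_Erf_diagonal] by (simp add: o_def)
qed

lemma tendsto_Erf_csqrt_imaginary_at_bot:
  assumes "0 < c"
  shows "((\<lambda>u. Erf (csqrt (\<i> * of_real c) * of_real u)) \<longlongrightarrow> - 1) at_bot"
proof -
  have "((\<lambda>u. - Erf (csqrt (\<i> * of_real c) * of_real u)) \<longlongrightarrow> - 1) at_top"
    by (intro tendsto_minus tendsto_Erf_csqrt_imaginary_at_top assms)
  then show ?thesis
    unfolding filterlim_at_bot_mirror by (simp add: Erf_minus[symmetric])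
qed

lemma fresnel_has_integral:
  fixes c m A B :: real
  assumes "0 < c" "A \<le> B"
  defines "a \<equiv> csqrt (\<i> * of_real c)"
  shows "((\<lambda>\<xi>. exp (- \<i> * of_real (c * (\<xi> - m)\<^sup>2))) has_integral
           of_real (sqrt pi) / (2 * a) * (Erf (a * of_real (B - m)) - Erf (a * of_real (A - m)))) {A..B}"
proof -
  have "a \<noteq> 0"
    using assms by (simp add: a_def)
  have a_sq: "(a * w)\<^sup>2 = \<i> * (of_real c * w\<^sup>2)" for w
    by (simp add: a_def power_mult_distrib)
  have "((\<lambda>w. of_real (sqrt pi) / (2 * a) * Erf (a * (w - of_real m))) has_field_derivative
      exp (- \<i> * of_real (c * (\<xi> - m)\<^sup>2))) (at (of_real \<xi>))" for \<xi>
    using \<open>a \<noteq> 0\<close>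
    by (auto intro!: derivative_eq_intros Erf_has_field_derivative[THEN DERIV_chain2]
        simp: a_sq)
  then have "((\<lambda>\<xi>. of_real (sqrt pi) / (2 * a) * Erf (a * (of_real \<xi> - of_real m))) has_vector_derivative
      exp (- \<i> * of_real (c * (\<xi> - m)\<^sup>2))) (at \<xi> within {A..B})" for \<xi>
    by (rule has_vector_derivative_real_field)
  from fundamental_theorem_of_calculus[OF \<open>A \<le> B\<close>, OF this]
  show ?thesis
    by (simp add: right_diff_distrib)
qed

lemma fresnel_tendsto_integral_at_bot:
  assumes "0 < c"
  defines "a \<equiv> csqrt (\<i> * of_real c)"
  shows "((\<lambda>A. integral {A..b} (\<lambda>\<xi>. exp (- \<i> * of_real (c * (\<xi> - m)\<^sup>2)))) \<longlongrightarrow>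
           of_real (sqrt pi) / (2 * a) * (1 + Erf (a * of_real (b - m)))) at_bot"
proof (rule Lim_transform_eventually)
  have shift: "filterlim (\<lambda>A. A - m) at_bot at_bot"
    by real_asymp
  have "((\<lambda>A. Erf (a * of_real (A - m))) \<longlongrightarrow> - 1) at_bot"
    using filterlim_compose[OF tendsto_Erf_csqrt_imaginary_at_bot[OF assms(1)] shift]
    by (simp only: a_def o_def)
  then have "((\<lambda>A. Erf (a * of_real (b - m)) - Erf (a * of_real (A - m)))
      \<longlongrightarrow> 1 + Erf (a * of_real (b - m))) at_bot"
    by (auto intro!: tendsto_eq_intros)
  then show "((\<lambda>A. of_real (sqrt pi) / (2 * a) * (Erf (a * of_real (b - m)) - Erf (a * of_real (A - m))))
      \<longlongrightarrow> of_real (sqrt pi) / (2 * a) * (1 + Erf (a * of_real (b - m)))) at_bot"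
    by (rule tendsto_mult_left)
  show "\<forall>\<^sub>F A in at_bot. of_real (sqrt pi) / (2 * a) * (Erf (a * of_real (b - m)) - Erf (a * of_real (A - m)))
      = integral {A..b} (\<lambda>\<xi>. exp (- \<i> * of_real (c * (\<xi> - m)\<^sup>2)))"
    using eventually_le_at_bot[of b]
    by eventually_elim (simp only: a_def integral_unique[OF fresnel_has_integral[OF assms(1)]])
qed

lemma fresnel_tendsto_integral_at_top:
  assumes "0 < c"
  defines "a \<equiv> csqrt (\<i> * of_real c)"
  shows "((\<lambda>B. integral {b..B} (\<lambda>\<xi>. exp (- \<i> * of_real (c * (\<xi> - m)\<^sup>2)))) \<longlongrightarrow>
           of_real (sqrt pi) / (2 * a) * Erfc (a * of_real (b - m))) at_top"
proof (rule Lim_transform_eventually)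
  have shift: "filterlim (\<lambda>B. B - m) at_top at_top"
    by real_asymp
  have "((\<lambda>B. Erf (a * of_real (B - m))) \<longlongrightarrow> 1) at_top"
    using filterlim_compose[OF tendsto_Erf_csqrt_imaginary_at_top[OF assms(1)] shift]
    by (simp only: a_def o_def)
  then have "((\<lambda>B. Erf (a * of_real (B - m)) - Erf (a * of_real (b - m)))
      \<longlongrightarrow> Erfc (a * of_real (b - m))) at_top"
    unfolding Erfc_def by (auto intro!: tendsto_eq_intros)
  then show "((\<lambda>B. of_real (sqrt pi) / (2 * a) * (Erf (a * of_real (B - m)) - Erf (a * of_real (b - m))))
      \<longlongrightarrow> of_real (sqrt pi) / (2 * a) * Erfc (a * of_real (b - m))) at_top"
    by (rule tendsto_mult_left)
  show "\<forall>\<^sub>F B in at_top. of_real (sqrt pi) / (2 * a) * (Erf (a * of_real (B - m)) - Erf (a * of_real (b - m)))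
      = integral {b..B} (\<lambda>\<xi>. exp (- \<i> * of_real (c * (\<xi> - m)\<^sup>2)))"
    using eventually_ge_at_top[of b]
    by eventually_elim (simp only: a_def integral_unique[OF fresnel_has_integral[OF assms(1)]])
qed

lemma kernel_integrand_complete_square:
  fixes k0 zb z x \<nu> :: real
  assumes "zb \<noteq> 0" "z \<noteq> 0" "z \<noteq> zb"
  shows "kernel_integrand k0 zb z x \<nu> = (\<lambda>\<xi>.
           exp (- \<i> * of_real (k0 / (2 * z) * (\<nu> - x)\<^sup>2)) *
           exp (- \<i> * of_real (k0 * z / (2 * zb * (z - zb)) * (\<xi> - (zb * x / z + (z - zb) * \<nu> / z))\<^sup>2)))"
proof
  fix \<xi>
  have "kernel_integrand k0 zb z x \<nu> \<xi> =
      exp (- \<i> * of_real (k0 / (2 * zb) * (\<xi> - \<nu>)\<^sup>2 + k0 / (2 * (z - zb)) * (x - \<xi>)\<^sup>2))"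
    by (simp add: kernel_integrand_def exp_add[symmetric] distrib_left)
  also have "k0 / (2 * zb) * (\<xi> - \<nu>)\<^sup>2 + k0 / (2 * (z - zb)) * (x - \<xi>)\<^sup>2 =
      k0 / (2 * z) * (\<nu> - x)\<^sup>2 + k0 * z / (2 * zb * (z - zb)) * (\<xi> - (zb * x / z + (z - zb) * \<nu> / z))\<^sup>2"
    using assms by (simp add: divide_simps power2_eq_square) algebra
  finally show "kernel_integrand k0 zb z x \<nu> \<xi> =
      exp (- \<i> * of_real (k0 / (2 * z) * (\<nu> - x)\<^sup>2)) *
      exp (- \<i> * of_real (k0 * z / (2 * zb * (z - zb)) * (\<xi> - (zb * x / z + (z - zb) * \<nu> / z))\<^sup>2))"
    by (simp add: exp_add[symmetric] distrib_left)
qed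

lemma kernel_integrand_tendsto_integral_at_bot:
  fixes k0 zb z x \<nu> b :: real
  assumes "0 < k0" "0 < zb" "zb < z"
  defines "a \<equiv> csqrt (\<i> * of_real (k0 * z / (2 * zb * (z - zb))))"
    and "m \<equiv> zb * x / z + (z - zb) * \<nu> / z"
  shows "((\<lambda>A. integral {A..b} (kernel_integrand k0 zb z x \<nu>)) \<longlongrightarrow>
           exp (- \<i> * of_real (k0 / (2 * z) * (\<nu> - x)\<^sup>2)) *
           (of_real (sqrt pi) / (2 * a) * (1 + Erf (a * of_real (b - m))))) at_bot"
proof -
  have nz: "zb \<noteq> 0" "z \<noteq> 0" "z \<noteq> zb"
    using assms by auto
  have "0 < k0 * z / (2 * zb * (z - zb))"
    using assms by simp
  then show ?thesis
    unfolding a_def m_def kernel_integrand_complete_square[OF nz] integral_mult_right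
    by (intro tendsto_mult_left fresnel_tendsto_integral_at_bot)
qed

lemma kernel_integrand_tendsto_integral_at_top:
  fixes k0 zb z x \<nu> b :: real
  assumes "0 < k0" "0 < zb" "zb < z"
  defines "a \<equiv> csqrt (\<i> * of_real (k0 * z / (2 * zb * (z - zb))))"
    and "m \<equiv> zb * x / z + (z - zb) * \<nu> / z"
  shows "((\<lambda>B. integral {b..B} (kernel_integrand k0 zb z x \<nu>)) \<longlongrightarrow>
           exp (- \<i> * of_real (k0 / (2 * z) * (\<nu> - x)\<^sup>2)) *
           (of_real (sqrt pi) / (2 * a) * Erfc (a * of_real (b - m)))) at_top"
proof -
  have nz: "zb \<noteq> 0" "z \<noteq> 0" "z \<noteq> zb"
    using assms by auto
  have "0 < k0 * z / (2 * zb * (z - zb))"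
    using assms by simp
  then show ?thesis
    unfolding a_def m_def kernel_integrand_complete_square[OF nz] integral_mult_right
    by (intro tendsto_mult_left fresnel_tendsto_integral_at_top)
qed

lemma knife_edge_prefactor:
  fixes lambda0 zb z :: real
  assumes "0 < lambda0" "0 < zb" "zb < z"
  shows "\<i> / of_real (lambda0 * sqrt (zb * (z - zb))) *
           (of_real (sqrt pi) / (2 * csqrt (\<i> * of_real (2 * pi / lambda0 * z / (2 * zb * (z - zb))))))
         = 1 / 2 * csqrt (\<i> / of_real (lambda0 * z))"
proof -
  define s c L where "s = 1 / (lambda0 * z)" and "c = 2 * pi / lambda0 * z / (2 * zb * (z - zb))"
    and "L = sqrt (zb * (z - zb))"
  have "0 < s" "0 < c" "0 < L"
    using assms by (simp_all add: s_def c_def L_def)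
  have "s * c = (sqrt pi / (lambda0 * L))\<^sup>2"
    using assms by (simp add: s_def c_def L_def power_divide power_mult_distrib field_simps power2_eq_square)
  then have "csqrt (\<i> * of_real s) * csqrt (\<i> * of_real c) = \<i> * of_real (sqrt pi / (lambda0 * L))"
    using csqrt_imaginary_mult[of s c] \<open>0 < s\<close> \<open>0 < c\<close> \<open>0 < L\<close> assms by simp
  moreover have "csqrt (\<i> * of_real c) \<noteq> 0"
    using \<open>0 < c\<close> by simp
  ultimately have s_root: "csqrt (\<i> * of_real s) = \<i> * of_real (sqrt pi / (lambda0 * L)) / csqrt (\<i> * of_real c)"
    by (simp add: nonzero_eq_divide_eq del: of_real_divide)
  have s_eq: "\<i> / of_real (lambda0 * z) = \<i> * of_real s"
    by (simp add: s_def divide_inverse)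
  show ?thesis
    unfolding c_def[symmetric] L_def[symmetric] s_eq s_root
    using \<open>csqrt (\<i> * of_real c) \<noteq> 0\<close> \<open>0 < L\<close> assms by (simp add: field_simps)
qed

theorem proposition1:
  fixes lambda0 zb xb1 xb2 z x \<nu> :: real
  assumes "lambda0 > 0" and "zb > 0" and "xb1 < xb2" and "z > zb"
  defines "k0 \<equiv> 2 * pi / lambda0"
  defines "a \<equiv> csqrt (\<i> * of_real (k0 * z / (2 * zb * (z - zb))))"
  shows "(\<exists>l. ((\<lambda>A. integral {A..xb1} (kernel_integrand k0 zb z x \<nu>)) \<longlongrightarrow> l) at_bot)
       \<and> (\<exists>l. ((\<lambda>B. integral {xb2..B} (kernel_integrand k0 zb z x \<nu>)) \<longlongrightarrow> l) at_top)
       \<and> K lambda0 zb xb1 xb2 z x \<nu> =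
           (1 / 2) * csqrt (\<i> / of_real (lambda0 * z))
           * exp (- \<i> * of_real (k0 / (2 * z) * (\<nu> - x) ^ 2))
           * (1 + Erf (a * of_real (xb1 - zb * x / z - (z - zb) * \<nu> / z))
                + Erfc (a * of_real (xb2 - zb * x / z - (z - zb) * \<nu> / z)))"
proof -
  have "0 < k0"
    using assms by (simp add: k0_def)
  define m P where "m = zb * x / z + (z - zb) * \<nu> / z"
    and "P = exp (- \<i> * of_real (k0 / (2 * z) * (\<nu> - x)\<^sup>2))"
  note left = kernel_integrand_tendsto_integral_at_bot[OF \<open>0 < k0\<close> assms(2,4),
      where x = x and \<nu> = \<nu> and b = xb1, folded a_def m_def P_def]
  note right = kernel_integrand_tendsto_integral_at_top[OF \<open>0 < k0\<close> assms(2,4),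
      where x = x and \<nu> = \<nu> and b = xb2, folded a_def m_def P_def]
  have "K lambda0 zb xb1 xb2 z x \<nu> = \<i> / of_real (lambda0 * sqrt (zb * (z - zb))) *
      (P * (of_real (sqrt pi) / (2 * a) * (1 + Erf (a * of_real (xb1 - m))))
       + P * (of_real (sqrt pi) / (2 * a) * Erfc (a * of_real (xb2 - m))))"
    unfolding K_def Let_def k0_def[symmetric]
    using tendsto_Lim[OF trivial_limit_at_bot_linorder left]
      tendsto_Lim[OF trivial_limit_at_top_linorder right]
    by simp
  also have "\<dots> = (\<i> / of_real (lambda0 * sqrt (zb * (z - zb))) * (of_real (sqrt pi) / (2 * a))) * P
      * (1 + Erf (a * of_real (xb1 - m)) + Erfc (a * of_real (xb2 - m)))"
    by algebra
  also have "\<dots> = 1 / 2 * csqrt (\<i> / of_real (lambda0 * z)) * P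
      * (1 + Erf (a * of_real (xb1 - m)) + Erfc (a * of_real (xb2 - m)))"
    unfolding a_def k0_def knife_edge_prefactor[OF assms(1,2,4)] ..
  finally show ?thesis
    using left right by (auto simp: P_def m_def diff_diff_eq)
qed

end
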